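(* For any integers $1\le n<m$, there exists a (connected) graph $G$ with $D(G)=n$ and $\dim(G)=m$.
   Context: All graphs are finite and simple. For a connected graph $G$ with shortest-path distance $d_G$, a set $S\subseteq V(G)$ is resolving if for any two distinct vertices $x,y$ there is $s\in S$ with $d_G(x,s)\neq d_G(y,s)$; the metric dimension $\dim(G)$ is the minimum size of a resolving set. A distinguishing coloring of a graph $G$ is a (not necessarily proper) vertex coloring such that the only automorphism of $G$ mapping every vertex to a vertex of the same color is the identity; the distinguishing number $D(G)$ is the minimum number of colors in a distinguishing coloring of $G$. *)

theory Defs
  imports Main
begin

definition simple_graph :: "'a set \<Rightarrow> ('a \<times> 'a) set \<Rightarrow> bool" where
  "simple_graph V E \<longleftrightarrow> finite V \<and> E \<subseteq> V \<times> V \<and> sym E \<and> irrefl E"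

definition walk :: "'a set \<Rightarrow> ('a \<times> 'a) set \<Rightarrow> 'a list \<Rightarrow> bool" where
  "walk V E xs \<longleftrightarrow> xs \<noteq> [] \<and> set xs \<subseteq> V \<and>
     (\<forall>i. Suc i < length xs \<longrightarrow> (xs ! i, xs ! Suc i) \<in> E)"

definition connected_graph :: "'a set \<Rightarrow> ('a \<times> 'a) set \<Rightarrow> bool" where
  "connected_graph V E \<longleftrightarrow> V \<noteq> {} \<and>
     (\<forall>x\<in>V. \<forall>y\<in>V. \<exists>xs. walk V E xs \<and> hd xs = x \<and> last xs = y)"

definition dist_G :: "'a set \<Rightarrow> ('a \<times> 'a) set \<Rightarrow> 'a \<Rightarrow> 'a \<Rightarrow> nat" where
  "dist_G V E x y = (LEAST k. \<exists>xs. walk V E xs \<and> hd xs = x \<and> last xs = y \<and> length xs = Suc k)"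

definition resolving :: "'a set \<Rightarrow> ('a \<times> 'a) set \<Rightarrow> 'a set \<Rightarrow> bool" where
  "resolving V E S \<longleftrightarrow> S \<subseteq> V \<and>
     (\<forall>x\<in>V. \<forall>y\<in>V. x \<noteq> y \<longrightarrow> (\<exists>s\<in>S. dist_G V E x s \<noteq> dist_G V E y s))"

definition metric_dim :: "'a set \<Rightarrow> ('a \<times> 'a) set \<Rightarrow> nat" where
  "metric_dim V E = (LEAST k. \<exists>S. resolving V E S \<and> card S = k)"

definition automorphism :: "'a set \<Rightarrow> ('a \<times> 'a) set \<Rightarrow> ('a \<Rightarrow> 'a) \<Rightarrow> bool" where
  "automorphism V E f \<longleftrightarrow> bij_betw f V V \<and>
     (\<forall>x\<in>V. \<forall>y\<in>V. (x, y) \<in> E \<longleftrightarrow> (f x, f y) \<in> E)"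

definition distinguishing :: "'a set \<Rightarrow> ('a \<times> 'a) set \<Rightarrow> ('a \<Rightarrow> nat) \<Rightarrow> bool" where
  "distinguishing V E c \<longleftrightarrow>
     (\<forall>f. automorphism V E f \<and> (\<forall>x\<in>V. c (f x) = c x) \<longrightarrow> (\<forall>x\<in>V. f x = x))"

definition distinguishing_number :: "'a set \<Rightarrow> ('a \<times> 'a) set \<Rightarrow> nat" where
  "distinguishing_number V E = (LEAST k. \<exists>c. c ` V \<subseteq> {..<k} \<and> distinguishing V E c)"

end

theory Submission
  imports Defs "HOL-Library.Nat_Bijection"
begin

text \<open>The witness is a spider: a centre with \<open>m + 1\<close> legs (paths), \<open>n\<close> of them single pendant
  edges and the others of the pairwise distinct lengths \<open>2, \<dots>, m + 1 - n\<close>. The centre is its only vertex of degree at least three, so automorphisms fix it and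
  preserve depth; a leg whose length occurs only once is then fixed pointwise, because its tip is
  the only vertex of degree one at that depth. Hence the symmetries are exactly the permutations of
  the \<open>n\<close> pendant vertices, which are twins, and \<open>n\<close> colours are needed and suffice. A set
  resolves the spider only if it meets all legs but one, and the tips of all legs but one do
  resolve it, so the metric dimension is \<open>m\<close>.\<close>

section \<open>Walks, distances and automorphisms\<close>

definition walk_betw :: "'a set \<Rightarrow> ('a \<times> 'a) set \<Rightarrow> 'a \<Rightarrow> 'a \<Rightarrow> nat \<Rightarrow> bool" where
  "walk_betw V E x y k \<longleftrightarrow> (\<exists>xs. walk V E xs \<and> hd xs = x \<and> last xs = y \<and> length xs = Suc k)"

definition degree :: "'a set \<Rightarrow> ('a \<times> 'a) set \<Rightarrow> 'a \<Rightarrow> nat" where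
  "degree V E x = card {y \<in> V. (x, y) \<in> E}"

lemma dist_G_eqI:
  assumes "walk_betw V E x y d" and "\<And>k. walk_betw V E x y k \<Longrightarrow> d \<le> k"
  shows "dist_G V E x y = d"
  unfolding dist_G_def walk_betw_def[symmetric] using assms by (rule Least_equality)

lemma all_Suc_less_Cons:
  "(\<forall>i. Suc i < length (x # xs) \<longrightarrow> Q i) \<longleftrightarrow>
     (xs \<noteq> [] \<longrightarrow> Q 0 \<and> (\<forall>i. Suc i < length xs \<longrightarrow> Q (Suc i)))"
  by (metis Suc_less_SucD Suc_mono gr0I gr_implies_not0 length_0_conv length_Cons nat.collapse)

lemma walk_Cons_Cons:
  "walk V E (x # y # ys) \<longleftrightarrow> x \<in> V \<and> (x, y) \<in> E \<and> walk V E (y # ys)"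
  unfolding walk_def by (subst all_Suc_less_Cons) auto

lemma walk_betw_0 [simp]: "walk_betw V E x y 0 \<longleftrightarrow> x = y \<and> x \<in> V"
  by (auto simp: walk_betw_def walk_def length_Suc_conv) (rule exI[of _ "[y]"], simp)

lemma walk_betw_Suc:
  "walk_betw V E x y (Suc k) \<longleftrightarrow> x \<in> V \<and> (\<exists>z. (x, z) \<in> E \<and> walk_betw V E z y k)"
proof
  assume "walk_betw V E x y (Suc k)"
  then obtain z ys where "walk V E (x # z # ys)" "last (z # ys) = y" "length ys = k"
    unfolding walk_betw_def by (auto simp: length_Suc_conv)
  then show "x \<in> V \<and> (\<exists>z. (x, z) \<in> E \<and> walk_betw V E z y k)"
    unfolding walk_Cons_Cons walk_betw_def by fastforce
next
  assume "x \<in> V \<and> (\<exists>z. (x, z) \<in> E \<and> walk_betw V E z y k)"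
  then obtain z zs where "x \<in> V" "(x, z) \<in> E" "walk V E zs" "hd zs = z" "last zs = y" "length zs = Suc k"
    unfolding walk_betw_def by blast
  moreover from this obtain ys where "zs = z # ys" by (cases zs) auto
  ultimately show "walk_betw V E x y (Suc k)"
    unfolding walk_betw_def by (intro exI[of _ "x # zs"]) (simp add: walk_Cons_Cons)
qed

lemma walk_betw_trans:
  "walk_betw V E x y k \<Longrightarrow> walk_betw V E y z l \<Longrightarrow> walk_betw V E x z (k + l)"
  by (induction k arbitrary: x) (auto simp: walk_betw_Suc)

lemma walk_betw_sym:
  assumes "sym E" and "E \<subseteq> V \<times> V" and "walk_betw V E x y k"
  shows "walk_betw V E y x k"
  using assms(3)
proof (induction k arbitrary: x)
  case (Suc k)
  then obtain z where "(x, z) \<in> E" "walk_betw V E y z k" by (auto simp: walk_betw_Suc)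
  moreover have "walk_betw V E z x 1"
    using \<open>(x, z) \<in> E\<close> assms(1,2) by (auto simp: walk_betw_Suc dest: symD)
  ultimately show ?case using walk_betw_trans by fastforce
qed simp

lemma walk_betw_potential_bound:
  fixes h :: "'a \<Rightarrow> int"
  assumes "\<And>a b. (a, b) \<in> E \<Longrightarrow> \<bar>h a - h b\<bar> \<le> 1" and "walk_betw V E x y k"
  shows "\<bar>h x - h y\<bar> \<le> int k"
  using assms(2)
proof (induction k arbitrary: x)
  case (Suc k)
  then obtain z where "(x, z) \<in> E" "walk_betw V E z y k" by (auto simp: walk_betw_Suc)
  with Suc.IH[of z] assms(1)[of x z] show ?case by arith
qed simp

lemma automorphism_apply: "automorphism V E f \<Longrightarrow> x \<in> V \<Longrightarrow> f x \<in> V"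
  by (auto simp: automorphism_def bij_betw_def)

lemma automorphism_walk_betw:
  assumes "automorphism V E f" and "E \<subseteq> V \<times> V" and "walk_betw V E x y k"
  shows "walk_betw V E (f x) (f y) k"
  using assms(3)
proof (induction k arbitrary: x)
  case 0
  then show ?case using automorphism_apply[OF assms(1)] by auto
next
  case (Suc k)
  then obtain z where "x \<in> V" "(x, z) \<in> E" "walk_betw V E z y k" by (auto simp: walk_betw_Suc)
  moreover from this have "z \<in> V" using assms(2) by auto
  ultimately have "f x \<in> V" "(f x, f z) \<in> E"
    using assms(1) automorphism_apply[OF assms(1)] by (auto simp: automorphism_def)
  then show ?case
    using Suc.IH[OF \<open>walk_betw V E z y k\<close>] by (auto simp: walk_betw_Suc)
qed

lemma automorphism_inv_into:
  assumes "automorphism V E f"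
  shows "automorphism V E (inv_into V f)"
proof -
  have f: "bij_betw f V V" using assms by (simp add: automorphism_def)
  then have g: "bij_betw (inv_into V f) V V" by (rule bij_betw_inv_into)
  have "(x, y) \<in> E \<longleftrightarrow> (inv_into V f x, inv_into V f y) \<in> E" if "x \<in> V" "y \<in> V" for x y
    using assms bij_betw_apply[OF g that(1)] bij_betw_apply[OF g that(2)]
      bij_betw_inv_into_right[OF f that(1)] bij_betw_inv_into_right[OF f that(2)]
    unfolding automorphism_def by metis
  with g show ?thesis by (simp add: automorphism_def)
qed

lemma dist_G_automorphism:
  assumes f: "automorphism V E f" and "E \<subseteq> V \<times> V" and "x \<in> V" "y \<in> V"
  shows "dist_G V E (f x) (f y) = dist_G V E x y"
proof -
  have "inv_into V f (f v) = v" if "v \<in> V" for v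
    using f that by (simp add: automorphism_def bij_betw_def)
  then have "walk_betw V E (f x) (f y) k \<longleftrightarrow> walk_betw V E x y k" for k
    using automorphism_walk_betw[OF f] automorphism_walk_betw[OF automorphism_inv_into[OF f]]
      assms(2-4) by metis
  then show ?thesis by (simp add: dist_G_def walk_betw_def[symmetric])
qed

lemma degree_automorphism:
  assumes f: "automorphism V E f" and "E \<subseteq> V \<times> V" and x: "x \<in> V"
  shows "degree V E (f x) = degree V E x"
proof -
  have bij: "bij_betw f V V" and hom: "\<And>y. y \<in> V \<Longrightarrow> (x, y) \<in> E \<longleftrightarrow> (f x, f y) \<in> E"
    using f x by (auto simp: automorphism_def)
  have "{z \<in> V. (f x, z) \<in> E} = f ` {y \<in> V. (x, y) \<in> E}"
    using bij_betw_imp_surj_on[OF bij] bij_betw_apply[OF bij] hom by (auto simp: image_iff) (metis imageE)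
  moreover have "inj_on f {y \<in> V. (x, y) \<in> E}"
    using bij_betw_imp_inj_on[OF bij] by (rule inj_on_subset) auto
  ultimately show ?thesis unfolding degree_def by (simp add: card_image)
qed

lemma swap_twins_automorphism:
  assumes "x \<in> V" "y \<in> V" "sym E" and twins: "\<And>v. (x, v) \<in> E \<longleftrightarrow> (y, v) \<in> E"
  shows "automorphism V E (id(x := y, y := x))"
proof -
  let ?\<sigma> = "id(x := y, y := x)"
  have fst_swap: "(?\<sigma> w, v) \<in> E \<longleftrightarrow> (w, v) \<in> E" for w v
    using twins[of v] by (cases "w = x"; cases "w = y") auto
  have snd_swap: "(u, ?\<sigma> w) \<in> E \<longleftrightarrow> (u, w) \<in> E" for u w
    using fst_swap[of w u] assms(3) unfolding sym_def by blast
  have "(u, v) \<in> E \<longleftrightarrow> (?\<sigma> u, ?\<sigma> v) \<in> E" for u v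
    using fst_swap snd_swap by simp
  moreover have "bij_betw ?\<sigma> V V"
    using assms(1,2) by (intro bij_betw_byWitness[where f' = ?\<sigma>]) auto
  ultimately show ?thesis by (simp add: automorphism_def)
qed

lemma distinguishing_inj_on_twins:
  assumes c: "distinguishing V E c" and "sym E" "T \<subseteq> V"
    and twins: "\<And>x y v. x \<in> T \<Longrightarrow> y \<in> T \<Longrightarrow> (x, v) \<in> E \<longleftrightarrow> (y, v) \<in> E"
  shows "inj_on c T"
proof (rule inj_onI)
  fix x y assume "x \<in> T" "y \<in> T" "c x = c y"
  then have "automorphism V E (id(x := y, y := x))" "\<forall>v\<in>V. c ((id(x := y, y := x)) v) = c v"
    using assms by (auto intro!: swap_twins_automorphism)
  then have "(id(x := y, y := x)) x = x"
    using c \<open>x \<in> T\<close> \<open>T \<subseteq> V\<close> unfolding distinguishing_def by blast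
  then show "x = y"
    by (cases "x = y") auto
qed

section \<open>Spiders\<close>

text \<open>Vertex \<open>t\<close> of leg \<open>a\<close> of a spider is the number \<open>prod_encode (a, t)\<close>; the centre
  is \<open>0 = prod_encode (0, 0)\<close>.\<close>

definition leg_vertex :: "nat \<Rightarrow> nat \<Rightarrow> nat" where
  "leg_vertex a t = prod_encode (a, t)"

definition leg :: "nat \<Rightarrow> nat" where
  "leg v = fst (prod_decode v)"

definition depth :: "nat \<Rightarrow> nat" where
  "depth v = snd (prod_decode v)"

lemma leg_leg_vertex [simp]: "leg (leg_vertex a t) = a"
  by (simp add: leg_def leg_vertex_def)

lemma depth_leg_vertex [simp]: "depth (leg_vertex a t) = t"
  by (simp add: depth_def leg_vertex_def)

lemma leg_vertex_leg_depth [simp]: "leg_vertex (leg v) (depth v) = v"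
  by (simp add: leg_vertex_def leg_def depth_def)

lemma leg_vertex_eq_iff [simp]: "leg_vertex a t = leg_vertex b s \<longleftrightarrow> a = b \<and> t = s"
  by (simp add: leg_vertex_def)

lemma leg_vertex_0_0: "leg_vertex 0 0 = 0"
  by (simp add: leg_vertex_def prod_encode_def)

lemma leg_vertex_eq_0_iff [simp]: "leg_vertex a t = 0 \<longleftrightarrow> a = 0 \<and> t = 0"
  by (metis leg_vertex_eq_iff leg_vertex_0_0)

lemma leg_0 [simp]: "leg 0 = 0"
  by (metis leg_leg_vertex leg_vertex_0_0)

lemma depth_0 [simp]: "depth 0 = 0"
  by (metis depth_leg_vertex leg_vertex_0_0)

lemma vertex_eq_iff_leg_depth: "u = v \<longleftrightarrow> leg u = leg v \<and> depth u = depth v"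
  by (metis leg_vertex_leg_depth)

locale spider =
  fixes N :: nat and L :: "nat \<Rightarrow> nat"
  assumes three_legs: "3 \<le> N" and leg_length_pos: "0 < L a"
begin

definition V :: "nat set" where
  "V = {v. v = 0 \<or> (leg v < N \<and> 0 < depth v \<and> depth v \<le> L (leg v))}"

definition E :: "(nat \<times> nat) set" where
  "E = {(u, v). u \<in> V \<and> v \<in> V \<and> (leg u = leg v \<or> u = 0 \<or> v = 0) \<and>
                (depth u = Suc (depth v) \<or> depth v = Suc (depth u))}"

definition distance :: "nat \<Rightarrow> nat \<Rightarrow> nat" where
  "distance u v = (if leg u = leg v \<or> u = 0 \<or> v = 0 then (depth u - depth v) + (depth v - depth u)
            else depth u + depth v)"

definition tip :: "nat \<Rightarrow> nat" where
  "tip a = leg_vertex a (L a)"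

definition down :: "nat \<Rightarrow> nat" where
  "down v = (if depth v = 1 then 0 else leg_vertex (leg v) (depth v - 1))"

definition up :: "nat \<Rightarrow> nat" where
  "up v = leg_vertex (leg v) (Suc (depth v))"

lemma zero_in_V [simp]: "0 \<in> V"
  by (simp add: V_def)

lemma leg_vertex_in_V: "a < N \<Longrightarrow> 0 < t \<Longrightarrow> t \<le> L a \<Longrightarrow> leg_vertex a t \<in> V"
  by (simp add: V_def)

lemma tip_in_V: "a < N \<Longrightarrow> tip a \<in> V"
  by (simp add: tip_def leg_vertex_in_V leg_length_pos)

lemma leg_less: "v \<in> V \<Longrightarrow> leg v < N"
  using three_legs by (auto simp: V_def)

lemma depth_pos: "v \<in> V \<Longrightarrow> v \<noteq> 0 \<Longrightarrow> 0 < depth v"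
  by (simp add: V_def)

lemma depth_le: "v \<in> V \<Longrightarrow> v \<noteq> 0 \<Longrightarrow> depth v \<le> L (leg v)"
  by (simp add: V_def)

lemma E_subset: "E \<subseteq> V \<times> V"
  by (auto simp: E_def)

lemma sym_E: "sym E"
  by (auto simp: E_def sym_def)

lemma finite_V: "finite V"
proof (rule finite_subset)
  show "V \<subseteq> (\<lambda>(a, t). leg_vertex a t) ` ({..<N} \<times> {..Max (L ` {..<N})})"
  proof
    fix v assume v: "v \<in> V"
    then have "depth v \<le> Max (L ` {..<N})"
      using leg_less[OF v] depth_le[OF v] by (cases "v = 0") (auto intro: Max_ge_iff[THEN iffD2])
    then show "v \<in> (\<lambda>(a, t). leg_vertex a t) ` ({..<N} \<times> {..Max (L ` {..<N})})"
      using leg_less[OF v] by (intro image_eqI[of _ _ "(leg v, depth v)"]) auto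
  qed
qed simp

lemma simple_graph: "simple_graph V E"
  using finite_V E_subset sym_E by (auto simp: simple_graph_def E_def irrefl_def)

lemma walk_betw_imp_distance_le:
  assumes "walk_betw V E u v k"
  shows "distance u v \<le> k"
proof (cases "leg u = leg v \<or> u = 0 \<or> v = 0")
  case True
  have "\<bar>int (depth u) - int (depth v)\<bar> \<le> int k"
    by (rule walk_betw_potential_bound[OF _ assms]) (auto simp: E_def)
  then show ?thesis using True by (simp add: distance_def)
next
  case False
  text \<open>Depth counted negatively off the leg of \<open>u\<close>: every walk to \<open>v\<close> passes through the centre.\<close>
  define h where "h w = (if leg w = leg u then int (depth w) else - int (depth w))" for w
  have "\<bar>h u - h v\<bar> \<le> int k"
    by (rule walk_betw_potential_bound[OF _ assms]) (auto simp: E_def h_def)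
  then show ?thesis using False by (simp add: distance_def h_def)
qed

lemma walk_to_centre: "u \<in> V \<Longrightarrow> walk_betw V E u 0 (depth u)"
proof (induction "depth u" arbitrary: u)
  case 0
  then show ?case by (metis depth_pos walk_betw_0 less_irrefl)
next
  case (Suc k)
  then have "u \<noteq> 0" by (metis depth_0 nat.distinct(1))
  then have "Suc k \<le> L (leg u)" using depth_le Suc by metis
  then have "down u \<in> V" "depth (down u) = k"
    using Suc.hyps(2) Suc.prems leg_less by (auto simp: down_def intro: leg_vertex_in_V)
  moreover from this have "(u, down u) \<in> E"
    using Suc.hyps(2) Suc.prems by (auto simp: E_def down_def)
  ultimately show ?case
    using Suc.hyps(1) Suc.hyps(2)[symmetric] Suc.prems by (auto simp: walk_betw_Suc)
qed

lemma walk_along_leg: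
  assumes "v \<in> V" "v \<noteq> 0"
  shows "u \<in> V \<Longrightarrow> leg u = leg v \<Longrightarrow> depth u = depth v + k \<Longrightarrow> walk_betw V E u v k"
proof (induction k arbitrary: u)
  case 0
  then show ?case using vertex_eq_iff_leg_depth[of u v] by simp
next
  case (Suc k)
  define u' where "u' = leg_vertex (leg v) (depth v + k)"
  have "u \<noteq> 0" using Suc.prems(3) by (metis add_Suc_right depth_0 nat.distinct(1))
  then have "u' \<in> V"
    using Suc.prems depth_le[of u] depth_pos[OF assms] leg_less[OF assms(1)]
    by (auto simp: u'_def intro!: leg_vertex_in_V)
  moreover have "(u, u') \<in> E"
    using \<open>u' \<in> V\<close> Suc.prems by (auto simp: E_def u'_def)
  ultimately show ?case
    using Suc.IH[of u'] Suc.prems(1) by (auto simp: u'_def walk_betw_Suc)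
qed

lemma walk_betw_distance:
  assumes u: "u \<in> V" and v: "v \<in> V"
  shows "walk_betw V E u v (distance u v)"
proof -
  have to_centre: "walk_betw V E x 0 (depth x)" "walk_betw V E 0 x (depth x)" if "x \<in> V" for x
    using walk_to_centre[OF that] walk_betw_sym[OF sym_E E_subset] by blast+
  consider "u = 0 \<or> v = 0" | "u \<noteq> 0" "v \<noteq> 0" "leg u = leg v" | "u \<noteq> 0" "v \<noteq> 0" "leg u \<noteq> leg v"
    by blast
  then show ?thesis
  proof cases
    case 1
    then show ?thesis using to_centre u v by (auto simp: distance_def)
  next
    case 2
    then have "walk_betw V E u v (depth u - depth v)" if "depth v \<le> depth u"
      using walk_along_leg[OF v, of u "depth u - depth v"] u that by simp
    moreover have "walk_betw V E v u (depth v - depth u)" if "depth u \<le> depth v"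
      using walk_along_leg[OF u, of v "depth v - depth u"] v that 2 by simp
    ultimately show ?thesis
      using 2 walk_betw_sym[OF sym_E E_subset] by (cases "depth v \<le> depth u") (auto simp: distance_def)
  next
    case 3
    then show ?thesis using walk_betw_trans[OF to_centre(1)[OF u] to_centre(2)[OF v]] by (simp add: distance_def)
  qed
qed

lemma dist_G_eq_distance: "u \<in> V \<Longrightarrow> v \<in> V \<Longrightarrow> dist_G V E u v = distance u v"
  by (intro dist_G_eqI walk_betw_distance walk_betw_imp_distance_le)

lemma connected_graph: "connected_graph V E"
  using walk_betw_distance zero_in_V unfolding connected_graph_def walk_betw_def by blast

lemma neighbours_centre: "{v \<in> V. (0, v) \<in> E} = (\<lambda>a. leg_vertex a 1) ` {..<N}"
proof -
  have "v \<in> V \<and> (0, v) \<in> E \<longleftrightarrow> v \<in> V \<and> depth v = 1" for v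
    by (auto simp: E_def)
  moreover have "v \<in> V \<and> depth v = 1 \<longleftrightarrow> (\<exists>a<N. v = leg_vertex a 1)" for v
  proof
    show "v \<in> V \<and> depth v = 1 \<Longrightarrow> \<exists>a<N. v = leg_vertex a 1"
      using leg_less leg_vertex_leg_depth[of v] by metis
    show "\<exists>a<N. v = leg_vertex a 1 \<Longrightarrow> v \<in> V \<and> depth v = 1"
      using leg_vertex_in_V leg_length_pos by (auto simp: Suc_le_eq)
  qed
  ultimately show ?thesis by blast
qed

lemma degree_centre: "degree V E 0 = N"
  by (simp add: degree_def neighbours_centre card_image inj_on_def)

lemma down_in_V: "v \<in> V \<Longrightarrow> v \<noteq> 0 \<Longrightarrow> down v \<in> V"
  using depth_pos[of v] depth_le[of v] leg_less[of v] by (auto simp: down_def intro!: leg_vertex_in_V)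

lemma neighbours_off_centre:
  assumes "v \<in> V" "v \<noteq> 0"
  shows "{u \<in> V. (v, u) \<in> E} = insert (down v) ({up v} \<inter> V)"
proof -
  have "(v, u) \<in> E \<longleftrightarrow> u \<in> V \<and> (u = down v \<or> u = up v)" for u
  proof
    assume "(v, u) \<in> E"
    then have u: "u \<in> V" "leg u = leg v \<or> u = 0"
      and depth: "depth v = Suc (depth u) \<or> depth u = Suc (depth v)"
      using assms(2) by (auto simp: E_def)
    show "u \<in> V \<and> (u = down v \<or> u = up v)"
    proof (cases "u = 0")
      case True
      then show ?thesis using u depth by (simp add: down_def)
    next
      case False
      then have "leg u = leg v" "0 < depth u"
        using u depth_pos by auto
      then show ?thesis
        using u(1) depth unfolding down_def up_def
        by (metis diff_Suc_1 leg_vertex_leg_depth less_numeral_extra(3) One_nat_def)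
    qed
  next
    assume "u \<in> V \<and> (u = down v \<or> u = up v)"
    then show "(v, u) \<in> E"
      using assms depth_pos[OF assms] by (auto simp: E_def down_def up_def)
  qed
  then show ?thesis
    using down_in_V[OF assms] by blast
qed

lemma degree_off_centre:
  assumes "v \<in> V" "v \<noteq> 0"
  shows "degree V E v = (if depth v < L (leg v) then 2 else 1)"
proof -
  have "up v \<in> V \<longleftrightarrow> depth v < L (leg v)"
    using leg_less[OF assms(1)] by (auto simp: up_def V_def)
  moreover have "down v \<noteq> up v"
    by (simp add: down_def up_def) linarith
  ultimately show ?thesis
    by (simp add: degree_def neighbours_off_centre[OF assms])
qed

lemma automorphism_fixes_centre:
  assumes "automorphism V E f"
  shows "f 0 = 0"
proof (rule ccontr)
  assume "f 0 \<noteq> 0"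
  then have "degree V E (f 0) \<le> 2"
    using automorphism_apply[OF assms zero_in_V] by (simp add: degree_off_centre)
  then show False
    using degree_automorphism[OF assms E_subset zero_in_V] degree_centre three_legs by simp
qed

lemma distance_automorphism:
  assumes "automorphism V E f" "u \<in> V" "v \<in> V"
  shows "distance (f u) (f v) = distance u v"
  using dist_G_automorphism[OF assms(1) E_subset assms(2,3)] automorphism_apply[OF assms(1)] assms(2,3)
  by (simp add: dist_G_eq_distance)

lemma depth_automorphism:
  assumes "automorphism V E f" "v \<in> V"
  shows "depth (f v) = depth v"
  using distance_automorphism[OF assms zero_in_V] automorphism_fixes_centre[OF assms(1)] by (simp add: distance_def)

lemma automorphism_ne_centre:
  assumes "automorphism V E f" "x \<in> V" "x \<noteq> 0"
  shows "f x \<noteq> 0"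
  using depth_automorphism[OF assms(1,2)] depth_pos[OF assms(2,3)] by (metis depth_0 less_irrefl)

text \<open>A tip is the only vertex of its depth with degree one, unless another leg has the same length.\<close>
lemma automorphism_fixes_tip:
  assumes f: "automorphism V E f" and "a < N" and unique: "\<And>b. b < N \<Longrightarrow> L b = L a \<Longrightarrow> b = a"
  shows "f (tip a) = tip a"
proof -
  let ?w = "f (tip a)"
  have tip: "tip a \<in> V" "tip a \<noteq> 0" "depth (tip a) = L a" "leg (tip a) = a"
    using tip_in_V[OF \<open>a < N\<close>] leg_length_pos[of a] by (auto simp: tip_def)
  have w: "?w \<in> V" "depth ?w = L a" "?w \<noteq> 0"
    using automorphism_apply[OF f tip(1)] depth_automorphism[OF f tip(1)] automorphism_ne_centre[OF f tip(1,2)]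
      tip(3) by simp_all
  have "degree V E ?w = 1"
    using degree_automorphism[OF f E_subset tip(1)] degree_off_centre[OF tip(1,2)] tip(3,4) by simp
  then have "\<not> depth ?w < L (leg ?w)"
    using degree_off_centre[OF w(1,3)] by (cases "depth ?w < L (leg ?w)") simp_all
  then have "depth ?w = L (leg ?w)"
    using depth_le[OF w(1,3)] by simp
  then have "leg ?w = a"
    using unique leg_less[OF w(1)] w(2) by simp
  then show ?thesis
    using w(2) tip(3,4) vertex_eq_iff_leg_depth[of ?w "tip a"] by simp
qed

lemma distance_tip:
  assumes "x \<in> V"
  shows "distance x (tip a) = (if x \<noteq> 0 \<and> leg x \<noteq> a then L a + depth x else L a - depth x)"
  using assms depth_le[OF assms] by (cases "x = 0") (auto simp: distance_def tip_def)

lemma automorphism_fixes_leg: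
  assumes f: "automorphism V E f" and x: "x \<in> V" "x \<noteq> 0"
    and unique: "\<And>b. b < N \<Longrightarrow> L b = L (leg x) \<Longrightarrow> b = leg x"
  shows "f x = x"
proof -
  let ?a = "leg x"
  have fx: "f x \<in> V" "depth (f x) = depth x" "f x \<noteq> 0" and "0 < depth x"
    using automorphism_apply[OF f x(1)] depth_automorphism[OF f x(1)] automorphism_ne_centre[OF f x]
      depth_pos[OF x] by simp_all
  have distance_eq: "distance (f x) (tip ?a) = distance x (tip ?a)"
    using distance_automorphism[OF f x(1) tip_in_V[OF leg_less[OF x(1)]]]
      automorphism_fixes_tip[OF f leg_less[OF x(1)] unique] by simp
  have "leg (f x) = ?a"
  proof (rule ccontr)
    assume "leg (f x) \<noteq> ?a"
    then have "distance (f x) (tip ?a) = L ?a + depth x"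
      using distance_tip[OF fx(1)] fx(2,3) by simp
    moreover have "distance x (tip ?a) = L ?a - depth x"
      using distance_tip[OF x(1)] by simp
    ultimately show False
      using distance_eq \<open>0 < depth x\<close> by simp
  qed
  then show ?thesis
    using fx(2) vertex_eq_iff_leg_depth by blast
qed

lemma depth_eq_if_distance_tip_eq:
  assumes x: "x \<in> V" and y: "y \<in> V" and "distance x (tip a) = distance y (tip a)"
  shows "depth x = depth y"
proof -
  have on: "depth z \<le> L a" if "z \<in> V" "z = 0 \<or> leg z = a" for z
    using that depth_le[OF that(1)] by (cases "z = 0") auto
  have off: "0 < depth z" if "z \<in> V" "\<not> (z = 0 \<or> leg z = a)" for z
    using that depth_pos[OF that(1)] by auto
  show ?thesis
    using assms distance_tip[OF x, of a] distance_tip[OF y, of a] on[OF x] on[OF y] off[OF x] off[OF y]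
    by (cases "x = 0 \<or> leg x = a"; cases "y = 0 \<or> leg y = a") auto
qed

lemma resolving_tips: "resolving V E (tip ` {1..<N})"
  unfolding resolving_def
proof (intro conjI ballI impI)
  show "tip ` {1..<N} \<subseteq> V"
    using tip_in_V by auto
  fix x y assume x: "x \<in> V" and y: "y \<in> V" and "x \<noteq> y"
  show "\<exists>s \<in> tip ` {1..<N}. dist_G V E x s \<noteq> dist_G V E y s"
  proof (rule ccontr)
    assume indistinguishable: "\<not> ?thesis"
    have same: "distance x (tip a) = distance y (tip a)" if "1 \<le> a" "a < N" for a
    proof -
      have "dist_G V E x (tip a) = dist_G V E y (tip a)"
        using indistinguishable that by auto
      then show ?thesis
        using x y tip_in_V[OF \<open>a < N\<close>] by (simp add: dist_G_eq_distance)
    qed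
    then have "depth x = depth y"
      using depth_eq_if_distance_tip_eq[OF x y same[of 1]] three_legs by simp
    then have "x \<noteq> 0" "y \<noteq> 0" "leg x \<noteq> leg y"
      using \<open>x \<noteq> y\<close> depth_pos[OF x] depth_pos[OF y] vertex_eq_iff_leg_depth[of x y]
      by (metis depth_0 less_irrefl)+
    text \<open>One of the two legs is not leg 0, so its tip is in the set and sees a difference.\<close>
    then obtain a where "1 \<le> a" "a < N" "leg x = a \<and> leg y \<noteq> a \<or> leg y = a \<and> leg x \<noteq> a"
      using leg_less[OF x] leg_less[OF y] by (metis less_one not_le)
    then show False
      using same[of a] distance_tip[OF x, of a] distance_tip[OF y, of a] \<open>depth x = depth y\<close>
        depth_pos[OF x \<open>x \<noteq> 0\<close>] \<open>x \<noteq> 0\<close> \<open>y \<noteq> 0\<close> by auto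
  qed
qed

lemma card_tips: "card (tip ` {1..<N}) = N - 1"
  by (simp add: card_image inj_on_def tip_def)

text \<open>Two legs missed by \<open>S\<close> are indistinguishable from \<open>S\<close> at their vertices of depth one.\<close>
lemma resolving_meets_legs:
  assumes S: "resolving V E S" and "a < N" "b < N" "a \<noteq> b"
  shows "a \<in> leg ` (S - {0}) \<or> b \<in> leg ` (S - {0})"
proof (rule ccontr)
  assume missed: "\<not> ?thesis"
  have first: "leg_vertex a 1 \<in> V" "leg_vertex b 1 \<in> V"
    using leg_vertex_in_V[OF assms(2)] leg_vertex_in_V[OF assms(3)] leg_length_pos[of a] leg_length_pos[of b]
    by (simp_all add: Suc_le_eq)
  moreover have "leg_vertex a 1 \<noteq> leg_vertex b 1"
    using \<open>a \<noteq> b\<close> by simp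
  ultimately obtain s where s: "s \<in> S" "dist_G V E (leg_vertex a 1) s \<noteq> dist_G V E (leg_vertex b 1) s"
    using S unfolding resolving_def by blast
  have "s \<in> V"
    using S s(1) by (auto simp: resolving_def)
  have "s = 0 \<or> (leg s \<noteq> a \<and> leg s \<noteq> b)"
    using missed s(1) by (auto simp: image_iff)
  then have "distance (leg_vertex a 1) s = distance (leg_vertex b 1) s"
    by (auto simp: distance_def)
  then show False
    using s(2) first \<open>s \<in> V\<close> by (simp add: dist_G_eq_distance)
qed

lemma card_resolving_ge:
  assumes S: "resolving V E S"
  shows "N - 1 \<le> card S"
proof -
  let ?A = "leg ` (S - {0})"
  have "finite S"
    using S finite_V by (auto simp: resolving_def intro: finite_subset)
  have "card ({..<N} - ?A) \<le> 1"
    using resolving_meets_legs[OF S] by (auto simp: card_le_Suc0_iff_eq)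
  moreover have "N \<le> card (({..<N} - ?A) \<union> ?A)"
    using \<open>finite S\<close> card_mono[of "({..<N} - ?A) \<union> ?A" "{..<N}"] by auto
  moreover have "card (({..<N} - ?A) \<union> ?A) \<le> card ({..<N} - ?A) + card ?A"
    by (rule card_Un_le)
  moreover have "card ?A \<le> card S"
    using \<open>finite S\<close> card_image_le[of "S - {0}" leg] card_mono[of S "S - {0}"] by auto
  ultimately show ?thesis by linarith
qed

lemma metric_dim_eq: "metric_dim V E = N - 1"
  unfolding metric_dim_def
  using resolving_tips card_tips card_resolving_ge by (intro Least_equality) auto

end

section \<open>Spiders with pendant legs\<close>

locale pendant_spider = spider +
  fixes n :: nat
  assumes some_pendant_legs: "1 \<le> n" and pendant_legs_le: "n \<le> N"
    and pendant_length: "a < n \<Longrightarrow> L a = 1"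
    and long_legs_unique: "n \<le> a \<Longrightarrow> a < N \<Longrightarrow> b < N \<Longrightarrow> L b = L a \<Longrightarrow> b = a"
begin

definition leg_colouring :: "nat \<Rightarrow> nat" where
  "leg_colouring v = (if leg v < n then leg v else 0)"

lemma automorphism_fixes_long_legs:
  assumes "automorphism V E f" "x \<in> V" "x \<noteq> 0" "n \<le> leg x"
  shows "f x = x"
  using automorphism_fixes_leg[OF assms(1-3)] long_legs_unique[OF assms(4) leg_less[OF assms(2)]] by blast

lemma distinguishing_leg_colouring: "distinguishing V E leg_colouring"
  unfolding distinguishing_def
proof (intro allI impI ballI)
  fix f x
  assume "automorphism V E f \<and> (\<forall>x\<in>V. leg_colouring (f x) = leg_colouring x)" and x: "x \<in> V"
  then have f: "automorphism V E f" and colour: "leg_colouring (f x) = leg_colouring x"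
    by auto
  have fx: "f x \<in> V" "depth (f x) = depth x"
    using automorphism_apply[OF f x] depth_automorphism[OF f x] by simp_all
  consider "x = 0" | "x \<noteq> 0" "n \<le> leg x" | "x \<noteq> 0" "leg x < n"
    by linarith
  then show "f x = x"
  proof cases
    case 1
    then show ?thesis using automorphism_fixes_centre[OF f] by simp
  next
    case 2
    then show ?thesis using automorphism_fixes_long_legs[OF f x] by simp
  next
    case 3
    then have "f x \<noteq> 0"
      using automorphism_ne_centre[OF f x] by simp
    have "leg (f x) < n"
    proof (rule ccontr)
      assume "\<not> leg (f x) < n"
      then have "f (f x) = f x"
        using automorphism_fixes_long_legs[OF f fx(1) \<open>f x \<noteq> 0\<close>] by simp
      then have "f x = x"
        using f fx(1) x by (auto simp: automorphism_def bij_betw_def inj_on_def)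
      then show False
        using 3 \<open>\<not> leg (f x) < n\<close> by simp
    qed
    then have "leg (f x) = leg x"
      using colour 3 by (simp add: leg_colouring_def)
    then show ?thesis
      using fx(2) vertex_eq_iff_leg_depth by blast
  qed
qed

lemma pendant_neighbour_iff:
  assumes "a < n"
  shows "(leg_vertex a 1, v) \<in> E \<longleftrightarrow> v = 0"
proof -
  have "L a = 1"
    using assms pendant_length by simp
  then have v: "leg_vertex a 1 \<in> V" "leg_vertex a 1 \<noteq> 0"
    using assms pendant_legs_le leg_vertex_in_V by auto
  moreover have "up (leg_vertex a 1) \<notin> V"
    using \<open>L a = 1\<close> by (simp add: up_def V_def)
  ultimately have "{u \<in> V. (leg_vertex a 1, u) \<in> E} = {0}"
    using neighbours_off_centre[OF v] by (simp add: down_def)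
  then show ?thesis
    using E_subset by blast
qed

lemma distinguishing_number_eq: "distinguishing_number V E = n"
  unfolding distinguishing_number_def
proof (rule Least_equality)
  show "\<exists>c. c ` V \<subseteq> {..<n} \<and> distinguishing V E c"
    using distinguishing_leg_colouring some_pendant_legs
    by (intro exI[of _ leg_colouring]) (auto simp: leg_colouring_def)
next
  fix k assume "\<exists>c. c ` V \<subseteq> {..<k} \<and> distinguishing V E c"
  then obtain c where c: "c ` V \<subseteq> {..<k}" "distinguishing V E c"
    by blast
  let ?T = "(\<lambda>a. leg_vertex a 1) ` {..<n}"
  have "?T \<subseteq> V"
    using pendant_legs_le pendant_length by (auto intro!: leg_vertex_in_V)
  moreover have "inj_on c ?T"
    using distinguishing_inj_on_twins[OF c(2) sym_E \<open>?T \<subseteq> V\<close>] pendant_neighbour_iff by blast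
  ultimately have "card ?T \<le> k"
    using c(1) card_inj_on_le[of c ?T "{..<k}"] by auto
  then show "n \<le> k"
    by (simp add: card_image inj_on_def)
qed

end

theorem proposition3p4:
  fixes n m :: nat
  assumes "1 \<le> n" and "n < m"
  shows "\<exists>(V :: nat set) E. simple_graph V E \<and> connected_graph V E \<and>
           distinguishing_number V E = n \<and> metric_dim V E = m"
proof -
  interpret pendant_spider "m + 1" "\<lambda>a. if a < n then 1 else a + 2 - n" n
    using assms by unfold_locales (auto split: if_splits)
  show ?thesis
    using simple_graph connected_graph distinguishing_number_eq metric_dim_eq by auto
qed

end
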